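(* Let $k$ be a positive integer, $a=3k+2$, $b=2a-3$, $c=2a-1$, $S=\{a,b,c\}$, $G=\langle S\rangle$. For $i\in[0,2k+1]$ let $I_{i,k}=\{ia-3\lfloor i/2\rfloor\}\cup[ia-3\lfloor i/2\rfloor+2,\,ia]$, and let $H_{9,k}=\bigcup_{i=0}^{2k+1}I_{i,k}\cup[2ka+4,\infty[$. Then: (1) $x\in G$ if and only if $x=(s+2q)a-3q+2r$ for some $q,r,s\in\mathbb{N}$ with $0\le r\le q$; (2) $I_{i,k}<I_{i+1,k}$ for every $i\in[0,2k]$; (3) $G=H_{9,k}$; (4) $H_{9,k}$ is a $3$-permutation numerical semigroup.
   Context: $\mathbb{N}=\{0,1,2,\dots\}$. A numerical semigroup is a submonoid $G$ of $(\mathbb{N},+,0)$ with $\mathbb{N}\setminus G$ finite; $\langle S\rangle$ is the submonoid generated by $S$. Writing the elements of a numerical semigroup as $0=g_0<g_1<g_2<\cdots$, it is an $n$-permutation numerical semigroup if it is generated by $\{g_1,\dots,g_n\}$ and for every $k\in\mathbb{N}$ the tuple $(g_{kn+1}\bmod n,\dots,g_{kn+n}\bmod n)$ contains exactly one representative of each residue class mod $n$. Notation: $[u,v]=\{x\in\mathbb{N}:u\le x\le v\}$ (empty if $u>v$), $[u,\infty[=\{x\in\mathbb{N}:x\ge u\}$; for nonempty $X,Y$, $X<Y$ means $x<y$ for all $x\in X,y\in Y$. *)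

theory Defs
  imports Main "HOL-Library.Infinite_Set"
begin

inductive_set gen :: "nat set \<Rightarrow> nat set" for S :: "nat set" where
  gen_zero: "0 \<in> gen S"
| gen_base: "x \<in> S \<Longrightarrow> x \<in> gen S"
| gen_add: "x \<in> gen S \<Longrightarrow> y \<in> gen S \<Longrightarrow> x + y \<in> gen S"

definition numerical_semigroup :: "nat set \<Rightarrow> bool" where
  "numerical_semigroup G \<longleftrightarrow> 0 \<in> G \<and> (\<forall>x\<in>G. \<forall>y\<in>G. x + y \<in> G) \<and> finite (UNIV - G)"

text \<open>g_j = enumerate G j is the j-th element of G in increasing order (g_0 = 0).\<close>
definition perm_numerical_semigroup :: "nat \<Rightarrow> nat set \<Rightarrow> bool" where
  "perm_numerical_semigroup n G \<longleftrightarrow>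
     numerical_semigroup G \<and>
     G = gen ((\<lambda>j. enumerate G j) ` {1..n}) \<and>
     (\<forall>k::nat. bij_betw (\<lambda>j. enumerate G (k * n + j) mod n) {1..n} {0..<n})"

definition set_less :: "nat set \<Rightarrow> nat set \<Rightarrow> bool" where
  "set_less X Y \<longleftrightarrow> (\<forall>x\<in>X. \<forall>y\<in>Y. x < y)"

definition Iset :: "nat \<Rightarrow> nat \<Rightarrow> nat \<Rightarrow> nat set" where
  "Iset a i k = {i * a - 3 * (i div 2)} \<union> {i * a - 3 * (i div 2) + 2 .. i * a}"

definition H9 :: "nat \<Rightarrow> nat \<Rightarrow> nat set" where
  "H9 a k = (\<Union>i\<in>{0..2*k+1}. Iset a i k) \<union> {2 * k * a + 4 ..}"

end

(* With b = 2a - 3 and c = 2a - 1, a combination s a + m b + n c equals i a - 3q + 2r with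
   i = s + 2(m + n), q = m + n and r = n, and for fixed i the numbers i a - 3q + 2r with
   r \<le> q \<le> i div 2 fill out exactly I_{i,k}. So G is the union of all blocks I_{i,k}; these are
   separated by gaps up to i = 2k + 1 and overlap into the half-line [2ka + 4, \<infinity>[ afterwards.
   Enumerating G, the right end i a of a block is followed by the two least elements of the next
   block, which are congruent to i a + 2 and i a + 1 mod 3, and then by runs of consecutive
   integers; so every triple (g_{3m+1}, g_{3m+2}, g_{3m+3}) meets all three residues. *)

theory Submission
  imports Defs
begin

lemma enumerate_Suc_eq:
  fixes S :: "nat set"
  assumes "infinite S" "enumerate S n = x" "y \<in> S" "x < y"
    and "\<And>z. x < z \<Longrightarrow> z < y \<Longrightarrow> z \<notin> S"
  shows "enumerate S (Suc n) = y"
  unfolding enumerate_Suc''[OF assms(1)] assms(2)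
  by (rule Least_equality) (use assms in \<open>auto simp: not_less[symmetric]\<close>)

lemma enumerate_add_eq_consecutive:
  fixes S :: "nat set"
  assumes "infinite S" "enumerate S n = x" "{x<..x + d} \<subseteq> S" "j \<le> d"
  shows "enumerate S (n + j) = x + j"
  using assms(4)
proof (induction j)
  case (Suc j)
  have "Suc (x + j) \<in> S"
    using assms(3) Suc.prems by auto
  then show ?case
    using enumerate_Suc_eq[OF assms(1) Suc.IH] Suc.prems by simp
qed (simp add: assms(2))

lemma gen_mult: "x \<in> gen S \<Longrightarrow> n * x \<in> gen S"
  by (induction n) (auto intro: gen.intros)

lemma gen_three_iff: "x \<in> gen {u, v, w} \<longleftrightarrow> (\<exists>l m n. x = l * u + m * v + n * w)"
proof
  assume "x \<in> gen {u, v, w}"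
  then show "\<exists>l m n. x = l * u + m * v + n * w"
  proof (induction rule: gen.induct)
    case gen_zero
    show ?case by (intro exI[of _ 0]) simp
  next
    case (gen_base x)
    then consider "x = u" | "x = v" | "x = w"
      by blast
    then show ?case
    proof cases
      case 1 then show ?thesis by (intro exI[of _ 1] exI[of _ 0]) simp
    next
      case 2 then show ?thesis by (intro exI[of _ 0] exI[of _ 1] exI[of _ 0]) simp
    next
      case 3 then show ?thesis by (intro exI[of _ 0] exI[of _ 0] exI[of _ 1]) simp
    qed
  next
    case (gen_add x y)
    then obtain l m n l' m' n' where "x = l * u + m * v + n * w" "y = l' * u + m' * v + n' * w"
      by blast
    then show ?case
      by (intro exI[of _ "l + l'"] exI[of _ "m + m'"] exI[of _ "n + n'"]) (simp add: algebra_simps)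
  qed
qed (auto intro: gen.intros gen_mult)

lemma bij_betw_mod_blocks:
  fixes f :: "nat \<Rightarrow> nat"
  assumes "0 < n" "P 0"
    and step: "\<And>p. P p \<Longrightarrow> P (p + n) \<and> distinct (map (\<lambda>j. f (p + j) mod n) [1..<n + 1])"
  shows "bij_betw (\<lambda>j. f (m * n + j) mod n) {1..n} {0..<n}"
proof -
  have "P (m * n)"
  proof (induction m)
    case (Suc m)
    then have "P (m * n + n)"
      using step by blast
    then show ?case
      by (simp add: add.commute)
  qed (simp add: assms(2))
  then have inj: "inj_on (\<lambda>j. f (m * n + j) mod n) {1..n}"
    using step by (simp add: distinct_map atLeastLessThanSuc_atLeastAtMost del: upt_Suc)
  moreover have "(\<lambda>j. f (m * n + j) mod n) ` {1..n} = {0..<n}"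
    by (rule card_subset_eq) (use assms(1) inj in \<open>auto simp: card_image\<close>)
  ultimately show ?thesis
    by (simp add: bij_betw_def)
qed

lemma mod_eq_less_imp_add_le:
  fixes x y m :: nat
  assumes "x mod m = y mod m" "x < y"
  shows "x + m \<le> y"
proof -
  have "m dvd y - x"
    using assms mod_eq_dvd_iff_nat[of x y m] by simp
  then have "m \<le> y - x"
    using assms(2) by (simp add: dvd_imp_le)
  then show ?thesis
    using assms(2) by linarith
qed

lemma three_mult_eq_add_two_mult:
  fixes j t :: nat
  assumes "j + 2 \<le> 3 * t"
  shows "\<exists>q r. r \<le> q \<and> q \<le> t \<and> 3 * q = j + 2 * r"
  using assms by presburger

locale H9_setting =
  fixes k a :: nat
  assumes k_pos: "0 < k" and a_eq: "a = 3 * k + 2"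
begin

definition lo :: "nat \<Rightarrow> nat" where
  "lo i = i * a - 3 * (i div 2)"

lemma mult_a_eq: "i * a = lo i + 3 * (i div 2)"
proof -
  have "3 * (i div 2) \<le> i * 2" by simp
  also have "\<dots> \<le> i * a" using a_eq by simp
  finally show ?thesis unfolding lo_def by simp
qed

lemma Iset_eq: "Iset a i k = insert (lo i) {lo i + 2 .. i * a}"
  unfolding Iset_def lo_def by auto

lemma lo_Suc: "lo (Suc i) + 3 * (Suc i div 2) = lo i + 3 * (i div 2) + a"
  using mult_a_eq[of i] mult_a_eq[of "Suc i"] by simp

lemma lo_mono: "i \<le> j \<Longrightarrow> lo i \<le> lo j"
proof (induction rule: dec_induct)
  case (step j)
  have "Suc j div 2 \<le> j div 2 + 1" by simp
  then show ?case
    using step.IH lo_Suc[of j] a_eq k_pos by linarith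
qed simp

lemma lo_Suc_ge: "i \<le> 2 * k \<Longrightarrow> i * a + 2 \<le> lo (Suc i)"
proof -
  assume "i \<le> 2 * k"
  then have "Suc i div 2 \<le> k" by simp
  then show ?thesis
    using lo_Suc[of i] mult_a_eq[of i] a_eq by linarith
qed

lemma lo_ge_mult_a: "j < i \<Longrightarrow> i \<le> 2 * k + 1 \<Longrightarrow> j * a + 2 \<le> lo i"
  using lo_Suc_ge[of j] lo_mono[of "Suc j" i] by simp

lemma lo_Suc_mod_3: "lo (Suc i) mod 3 = (i * a + 2) mod 3"
proof -
  have "lo (Suc i) + 3 * (Suc i div 2) = i * a + 2 + 3 * k"
    using lo_Suc[of i] mult_a_eq[of i] a_eq by linarith
  then show ?thesis
    by (metis mod_mult_self2)
qed

lemma lo_2k_plus_1: "lo (2 * k + 1) = 2 * k * a + 2"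
proof -
  have "(2 * k + 1) * a = 2 * k * a + a" by simp
  then show ?thesis
    using mult_a_eq[of "2 * k + 1"] a_eq by simp
qed

lemma lo_2k_plus_2: "lo (2 * k + 2) = 2 * k * a + 3 * k + 1"
proof -
  have "(2 * k + 2) * a = 2 * k * a + 2 * a" by simp
  then show ?thesis
    using mult_a_eq[of "2 * k + 2"] a_eq by simp
qed

lemma combination_eq:
  "r \<le> q \<Longrightarrow> (s + 2 * q) * a - 3 * q + 2 * r = s * a + (q - r) * (2 * a - 3) + r * (2 * a - 1)"
  unfolding a_eq by (auto simp: algebra_simps le_iff_add)

lemma gen_iff:
  "x \<in> gen {a, 2 * a - 3, 2 * a - 1} \<longleftrightarrow> (\<exists>q r s. r \<le> q \<and> x = (s + 2 * q) * a - 3 * q + 2 * r)"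
proof
  assume "x \<in> gen {a, 2 * a - 3, 2 * a - 1}"
  then obtain l m n where "x = l * a + m * (2 * a - 3) + n * (2 * a - 1)"
    unfolding gen_three_iff by blast
  then have "x = (l + 2 * (m + n)) * a - 3 * (m + n) + 2 * n"
    using combination_eq[of n "m + n" l] by simp
  then show "\<exists>q r s. r \<le> q \<and> x = (s + 2 * q) * a - 3 * q + 2 * r"
    by (intro exI[of _ "m + n"] exI[of _ n] exI[of _ l]) simp
next
  assume "\<exists>q r s. r \<le> q \<and> x = (s + 2 * q) * a - 3 * q + 2 * r"
  then obtain q r s where "r \<le> q" "x = (s + 2 * q) * a - 3 * q + 2 * r"
    by blast
  then show "x \<in> gen {a, 2 * a - 3, 2 * a - 1}"
    unfolding gen_three_iff using combination_eq by blast
qed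

lemma Iset_iff:
  "x \<in> Iset a i k \<longleftrightarrow> (\<exists>q r. r \<le> q \<and> q \<le> i div 2 \<and> x = i * a - 3 * q + 2 * r)"
proof -
  define t where "t = i div 2"
  have ia: "i * a = lo i + 3 * t"
    unfolding t_def by (rule mult_a_eq)
  show ?thesis
  proof
    assume "x \<in> Iset a i k"
    then consider "x = lo i" | "lo i + 2 \<le> x" "x \<le> i * a"
      unfolding Iset_eq by auto
    then show "\<exists>q r. r \<le> q \<and> q \<le> i div 2 \<and> x = i * a - 3 * q + 2 * r"
    proof cases
      case 1
      then have "x = i * a - 3 * t + 2 * 0"
        using ia by simp
      then show ?thesis
        unfolding t_def by blast
    next
      case 2
      then have "i * a - x + 2 \<le> 3 * t"
        using ia by linarith
      then obtain q r where "r \<le> q" "q \<le> t" "3 * q = i * a - x + 2 * r"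
        by (meson three_mult_eq_add_two_mult)
      moreover from this have "x = i * a - 3 * q + 2 * r"
        using 2 ia by linarith
      ultimately show ?thesis
        unfolding t_def by blast
    qed
  next
    assume "\<exists>q r. r \<le> q \<and> q \<le> i div 2 \<and> x = i * a - 3 * q + 2 * r"
    then obtain q r where qr: "r \<le> q" "q \<le> t" "x = lo i + 3 * (t - q) + 2 * r"
      using ia unfolding t_def by auto
    then show "x \<in> Iset a i k"
      unfolding Iset_eq ia by (cases "q < t"; cases "r = 0") auto
  qed
qed

lemma gen_eq_UN_Iset: "gen {a, 2 * a - 3, 2 * a - 1} = (\<Union>i. Iset a i k)"
proof (intro set_eqI iffI)
  fix x
  assume "x \<in> gen {a, 2 * a - 3, 2 * a - 1}"
  then obtain q r s where "r \<le> q" "x = (s + 2 * q) * a - 3 * q + 2 * r"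
    unfolding gen_iff by blast
  moreover have "q \<le> (s + 2 * q) div 2"
    by simp
  ultimately have "x \<in> Iset a (s + 2 * q) k"
    unfolding Iset_iff by blast
  then show "x \<in> (\<Union>i. Iset a i k)"
    by blast
next
  fix x
  assume "x \<in> (\<Union>i. Iset a i k)"
  then obtain i where "x \<in> Iset a i k"
    by blast
  then obtain q r where "r \<le> q" "q \<le> i div 2" "x = i * a - 3 * q + 2 * r"
    unfolding Iset_iff by blast
  then have "r \<le> q \<and> x = ((i - 2 * q) + 2 * q) * a - 3 * q + 2 * r"
    by simp
  then show "x \<in> gen {a, 2 * a - 3, 2 * a - 1}"
    unfolding gen_iff by blast
qed

lemma Iset_add_a: "x \<in> Iset a i k \<Longrightarrow> x + a \<in> Iset a (Suc i) k"
proof -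
  assume "x \<in> Iset a i k"
  then obtain q r where qr: "r \<le> q" "q \<le> i div 2" "x = i * a - 3 * q + 2 * r"
    unfolding Iset_iff by blast
  then have "3 * q \<le> i * a"
    using mult_a_eq[of i] by linarith
  then have "x + a = Suc i * a - 3 * q + 2 * r"
    using qr(3) by simp
  moreover have "q \<le> Suc i div 2"
    using qr(2) by simp
  ultimately show ?thesis
    unfolding Iset_iff using qr(1) by blast
qed

lemma tail_subset_UN_Iset: "2 * k * a + 4 \<le> y \<Longrightarrow> \<exists>i. y \<in> Iset a i k"
proof (induction y rule: less_induct)
  case (less y)
  have a2: "(2 * k + 2) * a = 2 * k * a + 2 * a"
    by (simp add: algebra_simps)
  have a1: "(2 * k + 1) * a = 2 * k * a + a"
    by simp
  show ?case
  proof (cases "y \<le> (2 * k + 2) * a")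
    case True
    show ?thesis
    proof (cases "y \<le> (2 * k + 1) * a")
      case True
      moreover have "lo (2 * k + 1) + 2 \<le> y"
        using less.prems lo_2k_plus_1 by linarith
      ultimately have "y \<in> Iset a (2 * k + 1) k"
        unfolding Iset_eq by simp
      then show ?thesis ..
    next
      case False
      then have "lo (2 * k + 2) + 2 \<le> y"
        using lo_2k_plus_2 a1 a_eq by linarith
      then have "y \<in> Iset a (2 * k + 2) k"
        using \<open>y \<le> (2 * k + 2) * a\<close> unfolding Iset_eq by simp
      then show ?thesis ..
    qed
  next
    case False
    have "5 \<le> a"
      using a_eq k_pos by simp
    then have "2 * k * a + 4 \<le> y - a" "y - a < y" "a \<le> y"
      using False a2 by linarith+
    then obtain i where "y - a \<in> Iset a i k"
      using less.IH by blast
    then have "y \<in> Iset a (Suc i) k"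
      using Iset_add_a[of "y - a" i] \<open>a \<le> y\<close> by simp
    then show ?thesis ..
  qed
qed

lemma Iset_subset_tail: "2 * k + 2 \<le> i \<Longrightarrow> x \<in> Iset a i k \<Longrightarrow> 2 * k * a + 4 \<le> x"
  using lo_mono[of "2 * k + 2" i] lo_2k_plus_2 k_pos unfolding Iset_eq by auto

lemma mem_H9_iff: "x \<in> H9 a k \<longleftrightarrow> (\<exists>i \<le> 2 * k + 1. x \<in> Iset a i k) \<or> 2 * k * a + 4 \<le> x"
  unfolding H9_def by auto

lemma Iset_subset_H9: "i \<le> 2 * k + 1 \<Longrightarrow> Iset a i k \<subseteq> H9 a k"
  unfolding H9_def by auto

lemma mem_H9_below:
  "x \<in> H9 a k \<Longrightarrow> x < 2 * k * a + 4 \<Longrightarrow> \<exists>i \<le> 2 * k + 1. x \<in> Iset a i k"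
  using mem_H9_iff not_le by blast

lemma UN_Iset_eq_H9: "(\<Union>i. Iset a i k) = H9 a k"
proof (intro set_eqI iffI)
  fix x
  assume "x \<in> (\<Union>i. Iset a i k)"
  then obtain i where "x \<in> Iset a i k"
    by blast
  show "x \<in> H9 a k"
  proof (cases "i \<le> 2 * k + 1")
    case True
    then show ?thesis
      using \<open>x \<in> Iset a i k\<close> Iset_subset_H9 by blast
  next
    case False
    then have "2 * k * a + 4 \<le> x"
      using Iset_subset_tail[of i x] \<open>x \<in> Iset a i k\<close> by simp
    then show ?thesis
      unfolding mem_H9_iff by (rule disjI2)
  qed
next
  fix x
  assume "x \<in> H9 a k"
  then show "x \<in> (\<Union>i. Iset a i k)"
    unfolding mem_H9_iff using tail_subset_UN_Iset by blast
qed

lemma Iset_bounds: "x \<in> Iset a i k \<Longrightarrow> lo i \<le> x \<and> x \<le> i * a"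
  using mult_a_eq[of i] unfolding Iset_eq by auto

lemma Iset_less_Iset_Suc: "i \<le> 2 * k \<Longrightarrow> set_less (Iset a i k) (Iset a (i + 1) k)"
  using lo_Suc_ge[of i] Iset_bounds[of _ i] Iset_bounds[of _ "Suc i"]
  unfolding set_less_def by fastforce

lemma gen_eq_H9: "gen {a, 2 * a - 3, 2 * a - 1} = H9 a k"
  using gen_eq_UN_Iset UN_Iset_eq_H9 by simp

lemma infinite_H9: "infinite (H9 a k)"
proof -
  have "{2 * k * a + 4 ..} \<subseteq> H9 a k"
    by (intro subsetI) (simp add: mem_H9_iff)
  then show ?thesis
    using infinite_Ici infinite_super by blast
qed

lemma not_mem_H9_between:
  assumes "i \<le> 2 * k" "i * a < y" "y < lo (Suc i)"
  shows "y \<notin> H9 a k"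
proof
  assume "y \<in> H9 a k"
  moreover have "y < 2 * k * a + 4"
    using assms(1,3) lo_mono[of "Suc i" "2 * k + 1"] lo_2k_plus_1 by simp
  ultimately obtain j where j: "j \<le> 2 * k + 1" "y \<in> Iset a j k"
    using mem_H9_below by blast
  show False
  proof (cases "j \<le> i")
    case True
    then show False
      using Iset_bounds[OF j(2)] assms(2) mult_le_mono1[of j i a] by linarith
  next
    case False
    then show False
      using Iset_bounds[OF j(2)] assms(3) lo_mono[of "Suc i" j] by linarith
  qed
qed

lemma lo_Suc_not_mem_H9:
  assumes "2 \<le> i" "i \<le> 2 * k + 1"
  shows "lo i + 1 \<notin> H9 a k"
proof
  assume "lo i + 1 \<in> H9 a k"
  moreover have "lo i + 1 < 2 * k * a + 4"
    using assms(2) lo_mono[of i "2 * k + 1"] lo_2k_plus_1 by simp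
  ultimately obtain j where j: "j \<le> 2 * k + 1" "lo i + 1 \<in> Iset a j k"
    using mem_H9_below by blast
  consider "j < i" | "j = i" | "i < j"
    by linarith
  then show False
  proof cases
    case 1
    then show False
      using Iset_bounds[OF j(2)] lo_ge_mult_a[of j i] assms(2) by linarith
  next
    case 2
    then show False
      using j(2) unfolding Iset_eq by simp
  next
    case 3
    then have "i * a + 2 \<le> lo j"
      using lo_Suc_ge[of i] lo_mono[of "Suc i" j] j(1) by simp
    then show False
      using Iset_bounds[OF j(2)] mult_a_eq[of i] by linarith
  qed
qed

lemma enumerate_H9_0: "enumerate (H9 a k) 0 = 0"
proof -
  have "0 \<in> H9 a k"
    using gen_eq_H9 gen_zero by blast
  then show ?thesis
    unfolding enumerate_0 by (simp add: Least_eq_0)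
qed

lemma enumerate_H9_Suc_mult_a:
  assumes "i \<le> 2 * k" "enumerate (H9 a k) n = i * a"
  shows "enumerate (H9 a k) (Suc n) = lo (Suc i)"
proof (rule enumerate_Suc_eq[OF infinite_H9 assms(2)])
  show "lo (Suc i) \<in> H9 a k"
    using assms(1) Iset_subset_H9[of "Suc i"] unfolding Iset_eq by auto
  show "i * a < lo (Suc i)"
    using lo_Suc_ge[OF assms(1)] by simp
qed (use not_mem_H9_between[OF assms(1)] in blast)

lemma enumerate_H9_after_mult_a:
  assumes "1 \<le> i" "i \<le> 2 * k" "enumerate (H9 a k) n = i * a"
  shows "enumerate (H9 a k) (n + 1) = lo (Suc i)"
    and "enumerate (H9 a k) (n + 2) = lo (Suc i) + 2"
    and "enumerate (H9 a k) (n + 3) = lo (Suc i) + 3"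
proof -
  have first: "enumerate (H9 a k) (Suc n) = lo (Suc i)"
    by (rule enumerate_H9_Suc_mult_a[OF assms(2,3)])
  have "lo (Suc i) + 3 \<le> Suc i * a"
    using assms(1) mult_a_eq[of "Suc i"] by simp
  then have "{lo (Suc i) + 2 .. lo (Suc i) + 3} \<subseteq> Iset a (Suc i) k"
    unfolding Iset_eq by auto
  then have in_H9: "{lo (Suc i) + 2 .. lo (Suc i) + 3} \<subseteq> H9 a k"
    using assms(2) Iset_subset_H9[of "Suc i"] by auto
  have second: "enumerate (H9 a k) (Suc (Suc n)) = lo (Suc i) + 2"
  proof (rule enumerate_Suc_eq[OF infinite_H9 first])
    show "\<And>z. lo (Suc i) < z \<Longrightarrow> z < lo (Suc i) + 2 \<Longrightarrow> z \<notin> H9 a k"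
      using lo_Suc_not_mem_H9[of "Suc i"] assms by (auto simp: less_Suc_eq)
  qed (use in_H9 in auto)
  have "enumerate (H9 a k) (Suc (Suc n) + 1) = lo (Suc i) + 2 + 1"
    by (rule enumerate_add_eq_consecutive[OF infinite_H9 second]) (use in_H9 in auto)
  then show "enumerate (H9 a k) (n + 1) = lo (Suc i)"
    and "enumerate (H9 a k) (n + 2) = lo (Suc i) + 2"
    and "enumerate (H9 a k) (n + 3) = lo (Suc i) + 3"
    using first second by (simp_all add: eval_nat_numeral)
qed

(* An invariant satisfied by every g_{3m+1}. *)
definition triple_head :: "nat \<Rightarrow> bool" where
  "triple_head x \<longleftrightarrow>
     (\<exists>i\<in>{1..2 * k}. x = i * a)
     \<or> (\<exists>i\<in>{1..2 * k}. lo i + 2 \<le> x \<and> x < i * a \<and> x mod 3 = i * a mod 3)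
     \<or> 2 * k * a + 4 \<le> x \<and> x mod 3 = (2 * k * a + 2) mod 3"

lemma triple_head_Iset:
  assumes "i \<in> {1..2 * k}" "lo i + 2 \<le> x" "x \<le> i * a" "x mod 3 = i * a mod 3"
  shows "triple_head x"
proof (cases "x = i * a")
  case True
  then show ?thesis
    unfolding triple_head_def using assms(1) by blast
next
  case False
  then have "x < i * a"
    using assms(3) by simp
  then show ?thesis
    unfolding triple_head_def using assms(1,2,4) by blast
qed

lemma triple_head_tail: "2 * k * a + 4 \<le> x \<Longrightarrow> x mod 3 = (2 * k * a + 2) mod 3 \<Longrightarrow> triple_head x"
  unfolding triple_head_def by simp

lemma triple_head_step:
  assumes "triple_head x" "enumerate (H9 a k) n = x"
  shows "triple_head (enumerate (H9 a k) (n + 3))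
    \<and> distinct [x mod 3, enumerate (H9 a k) (n + 1) mod 3, enumerate (H9 a k) (n + 2) mod 3]"
proof -
  have consecutive: "enumerate (H9 a k) (n + j) = x + j"
    if "{x<..x + 3} \<subseteq> H9 a k" "j \<le> 3" for j
    by (rule enumerate_add_eq_consecutive[OF infinite_H9 assms(2) that])
  have "distinct [x mod 3, (x + 1) mod 3, (x + 2) mod 3]"
    by (simp add: mod_Suc)
  then have consecutive_step: ?thesis
    if "{x<..x + 3} \<subseteq> H9 a k" "triple_head (x + 3)"
    using consecutive[OF that(1), of 1] consecutive[OF that(1), of 2]
      consecutive[OF that(1), of 3] that(2) by simp
  from assms(1) consider
      (last) i where "i \<in> {1..2 * k}" "x = i * a"
    | (inner) i where "i \<in> {1..2 * k}" "lo i + 2 \<le> x" "x < i * a" "x mod 3 = i * a mod 3"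
    | (tail) "2 * k * a + 4 \<le> x" "x mod 3 = (2 * k * a + 2) mod 3"
    unfolding triple_head_def by blast
  then show ?thesis
  proof cases
    case (last i)
    then have i: "1 \<le> i" "i \<le> 2 * k"
      by simp_all
    note next3 = enumerate_H9_after_mult_a[OF i assms(2)[unfolded last(2)]]
    have "triple_head (lo (Suc i) + 3)"
    proof (cases "Suc i \<le> 2 * k")
      case True
      have "lo (Suc i) + 3 \<le> Suc i * a" "(lo (Suc i) + 3) mod 3 = Suc i * a mod 3"
        using i(1) mult_a_eq[of "Suc i"] by simp_all
      then show ?thesis
        using True by (intro triple_head_Iset[of "Suc i"]) simp_all
    next
      case False
      then have "i = 2 * k"
        using i(2) by simp
      have "(2 * k * a + 2 + 3) mod 3 = (2 * k * a + 2) mod 3"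
        by (simp only: mod_add_self2)
      then show ?thesis
        using lo_2k_plus_1 \<open>i = 2 * k\<close> by (intro triple_head_tail) simp_all
    qed
    moreover have "distinct [x mod 3, lo (Suc i) mod 3, (lo (Suc i) + 2) mod 3]"
      using lo_Suc_mod_3[of i] last(2) by (auto simp: mod_Suc)
    ultimately show ?thesis
      using next3 by simp
  next
    case (inner i)
    then have "x + 3 \<le> i * a"
      using mod_eq_less_imp_add_le by blast
    then have "{x<..x + 3} \<subseteq> Iset a i k"
      using inner(2) unfolding Iset_eq by auto
    then have "{x<..x + 3} \<subseteq> H9 a k"
      using inner(1) Iset_subset_H9[of i] by auto
    moreover have "triple_head (x + 3)"
      using inner \<open>x + 3 \<le> i * a\<close> by (intro triple_head_Iset[of i]) simp_all
    ultimately show ?thesis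
      by (rule consecutive_step)
  next
    case tail
    then have "{x<..x + 3} \<subseteq> H9 a k"
      by (intro subsetI) (simp add: mem_H9_iff)
    moreover have "triple_head (x + 3)"
      using tail by (intro triple_head_tail) simp_all
    ultimately show ?thesis
      by (rule consecutive_step)
  qed
qed

lemma enumerate_H9_1_2_3:
  "enumerate (H9 a k) 1 = a" "enumerate (H9 a k) 2 = 2 * a - 3" "enumerate (H9 a k) 3 = 2 * a - 1"
proof -
  have lo: "lo 1 = a" "lo 2 = 2 * a - 3" "2 * a - 3 + 2 = 2 * a - 1"
    unfolding lo_def using a_eq by simp_all
  show one: "enumerate (H9 a k) 1 = a"
    using enumerate_H9_Suc_mult_a[of 0 0] enumerate_H9_0 lo(1) by simp
  have "enumerate (H9 a k) 2 = lo 2" "enumerate (H9 a k) 3 = lo 2 + 2"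
    using enumerate_H9_after_mult_a(1,2)[of 1 1] k_pos one
    by (simp_all add: numeral_2_eq_2 numeral_3_eq_3)
  then show "enumerate (H9 a k) 2 = 2 * a - 3" "enumerate (H9 a k) 3 = 2 * a - 1"
    using lo(2,3) by simp_all
qed

lemma numerical_semigroup_H9: "numerical_semigroup (H9 a k)"
proof -
  have "UNIV - H9 a k \<subseteq> {..<2 * k * a + 4}"
    by (metis Diff_iff lessThan_iff mem_H9_iff not_le subsetI)
  then show ?thesis
    unfolding numerical_semigroup_def gen_eq_H9[symmetric]
    using finite_subset by (blast intro: gen.intros)
qed

lemma perm_numerical_semigroup_H9: "perm_numerical_semigroup 3 (H9 a k)"
  unfolding perm_numerical_semigroup_def
proof (intro conjI allI)
  show "numerical_semigroup (H9 a k)"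
    by (rule numerical_semigroup_H9)
  have "{1..3 :: nat} = {1, 2, 3}"
    by auto
  then have "(\<lambda>j. enumerate (H9 a k) j) ` {1..3} = {a, 2 * a - 3, 2 * a - 1}"
    using enumerate_H9_1_2_3 by simp
  then show "H9 a k = gen ((\<lambda>j. enumerate (H9 a k) j) ` {1..3})"
    using gen_eq_H9 by simp
  fix m
  show "bij_betw (\<lambda>j. enumerate (H9 a k) (m * 3 + j) mod 3) {1..3} {0..<3}"
  proof (rule bij_betw_mod_blocks[where P = "\<lambda>p. triple_head (enumerate (H9 a k) (p + 1))"])
    have "triple_head (1 * a)"
      unfolding triple_head_def using k_pos by (intro disjI1 bexI[of _ 1]) simp_all
    then show "triple_head (enumerate (H9 a k) (0 + 1))"
      using enumerate_H9_1_2_3(1) by simp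
    show "triple_head (enumerate (H9 a k) (p + 3 + 1))
        \<and> distinct (map (\<lambda>j. enumerate (H9 a k) (p + j) mod 3) [1..<3 + 1])"
      if "triple_head (enumerate (H9 a k) (p + 1))" for p
    proof -
      have "[1..<3 + 1] = [1, 2, 3 :: nat]" "p + 1 + 3 = p + 3 + 1" "p + 1 + 1 = p + 2"
        "p + 1 + 2 = p + 3"
        by (simp_all add: upt_rec)
      then show ?thesis
        using triple_head_step[OF that refl] by (simp only: list.map)
    qed
  qed simp
qed

end

theorem lemma4p9:
  fixes k a b c :: nat and G :: "nat set"
  assumes "k > 0" and "a = 3 * k + 2" and "b = 2 * a - 3" and "c = 2 * a - 1"
    and "G = gen {a, b, c}"
  shows "(\<forall>x. x \<in> G \<longleftrightarrow> (\<exists>q r s. r \<le> q \<and> x = (s + 2 * q) * a - 3 * q + 2 * r))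
    \<and> (\<forall>i\<in>{0..2*k}. set_less (Iset a i k) (Iset a (i + 1) k))
    \<and> G = H9 a k
    \<and> perm_numerical_semigroup 3 (H9 a k)"
proof -
  interpret H9_setting k a
    using assms(1,2) by unfold_locales
  have G: "G = gen {a, 2 * a - 3, 2 * a - 1}"
    using assms(3-5) by simp
  show ?thesis
  proof (intro conjI)
    show "\<forall>x. x \<in> G \<longleftrightarrow> (\<exists>q r s. r \<le> q \<and> x = (s + 2 * q) * a - 3 * q + 2 * r)"
      unfolding G using gen_iff by blast
    show "\<forall>i\<in>{0..2*k}. set_less (Iset a i k) (Iset a (i + 1) k)"
      using Iset_less_Iset_Suc by simp
    show "G = H9 a k"
      unfolding G by (rule gen_eq_H9)
  qed (rule perm_numerical_semigroup_H9)
qed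

end
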